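(* Let $R$ be an associative unital division ring over a field $F$ with $\operatorname{char} F=0$ (with $F$ contained in the center of $R$). Let $\varphi_{i,j}\in R$ for $i,j\in\mathbb{Z}_{\geq 0}$. For $l,m\in\mathbb{Z}_{\geq0}$ and $n\geq 1$ put $$\Theta_{l,m,n}=\bigl(\varphi_{l+i-1,\,m+j-1}\bigr)_{1\leq i,j\leq n},\qquad \theta_{l,m,n}=|\Theta_{l,m,n}|_{nn},$$ and adopt the convention $\theta_{l,m,0}^{-1}:=0$. Assume that all quasideterminants of all the matrices $\Theta_{l,m,n}$ and of their square submatrices occurring below are defined and that all $\theta_{l,m,n}$ ($n\geq1$) are invertible. Then for all $l,m\geq 0$ and $n\geq 1$, $$\theta_{l+1,m+1,n}=\theta_{l,m,n+1}+\theta_{l+1,m,n}\bigl(\theta_{l,m,n}^{-1}-\theta_{l+1,m+1,n-1}^{-1}\bigr)\theta_{l,m+1,n}.$$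
   Context: For an $n\times n$ matrix $X=(x_{ij})$ over $R$, let $X^{ij}$ denote the matrix obtained by deleting row $i$ and column $j$, $r_i^j$ the $i$-th row with the $j$-th entry removed, and $c_j^i$ the $j$-th column with the $i$-th entry removed. The quasideterminant is $|X|_{ij}=x_{ij}-r_i^j\,(X^{ij})^{-1}\,c_j^i$, defined when $X^{ij}$ is invertible; for $n=1$, $|X|_{11}=x_{11}$. *)

theory Defs
  imports Main
begin

text \<open>Square n x n matrices over a (possibly noncommutative) ring are represented as
functions nat \<Rightarrow> nat \<Rightarrow> 'a, only entries with indices < n being relevant
(indices are 0-based: row i of the paper is row i-1 here).\<close>

definition mat_mult :: "nat \<Rightarrow> (nat \<Rightarrow> nat \<Rightarrow> 'a::semiring_0) \<Rightarrow> (nat \<Rightarrow> nat \<Rightarrow> 'a) \<Rightarrow> nat \<Rightarrow> nat \<Rightarrow> 'a" where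
  "mat_mult n A B = (\<lambda>i j. \<Sum>k<n. A i k * B k j)"

definition mat_id :: "nat \<Rightarrow> nat \<Rightarrow> 'a::{zero,one}" where
  "mat_id = (\<lambda>i j. if i = j then 1 else 0)"

definition is_mat_inverse :: "nat \<Rightarrow> (nat \<Rightarrow> nat \<Rightarrow> 'a::semiring_1) \<Rightarrow> (nat \<Rightarrow> nat \<Rightarrow> 'a) \<Rightarrow> bool" where
  "is_mat_inverse n A B \<longleftrightarrow>
     (\<forall>i<n. \<forall>j<n. mat_mult n A B i j = mat_id i j \<and> mat_mult n B A i j = mat_id i j)"

definition mat_invertible :: "nat \<Rightarrow> (nat \<Rightarrow> nat \<Rightarrow> 'a::semiring_1) \<Rightarrow> bool" where
  "mat_invertible n A \<longleftrightarrow> (\<exists>B. is_mat_inverse n A B)"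

definition mat_inv :: "nat \<Rightarrow> (nat \<Rightarrow> nat \<Rightarrow> 'a::semiring_1) \<Rightarrow> nat \<Rightarrow> nat \<Rightarrow> 'a" where
  "mat_inv n A = (SOME B. is_mat_inverse n A B)"

text \<open>Index of the original matrix corresponding to index a after deleting index i.\<close>
definition skip :: "nat \<Rightarrow> nat \<Rightarrow> nat" where
  "skip i a = (if a < i then a else a + 1)"

definition minor :: "nat \<Rightarrow> nat \<Rightarrow> (nat \<Rightarrow> nat \<Rightarrow> 'a) \<Rightarrow> nat \<Rightarrow> nat \<Rightarrow> 'a" where
  "minor i j A = (\<lambda>a b. A (skip i a) (skip j b))"

definition qdet :: "nat \<Rightarrow> (nat \<Rightarrow> nat \<Rightarrow> 'a::ring_1) \<Rightarrow> nat \<Rightarrow> nat \<Rightarrow> 'a" where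
  "qdet n X i j =
     (if n = 1 then X i j
      else X i j - (\<Sum>a<n-1. \<Sum>b<n-1.
                     X i (skip j a) * mat_inv (n-1) (minor i j X) a b * X (skip i b) j))"

definition qdet_defined :: "nat \<Rightarrow> (nat \<Rightarrow> nat \<Rightarrow> 'a::ring_1) \<Rightarrow> nat \<Rightarrow> nat \<Rightarrow> bool" where
  "qdet_defined n X i j \<longleftrightarrow> n = 1 \<or> mat_invertible (n-1) (minor i j X)"

definition Theta :: "(nat \<Rightarrow> nat \<Rightarrow> 'a) \<Rightarrow> nat \<Rightarrow> nat \<Rightarrow> nat \<Rightarrow> nat \<Rightarrow> 'a" where
  "Theta \<phi> l m = (\<lambda>i j. \<phi> (l + i) (m + j))"

definition theta :: "(nat \<Rightarrow> nat \<Rightarrow> 'a::ring_1) \<Rightarrow> nat \<Rightarrow> nat \<Rightarrow> nat \<Rightarrow> 'a" where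
  "theta \<phi> l m n = qdet n (Theta \<phi> l m) (n-1) (n-1)"

definition theta_inv :: "(nat \<Rightarrow> nat \<Rightarrow> 'a::division_ring) \<Rightarrow> nat \<Rightarrow> nat \<Rightarrow> nat \<Rightarrow> 'a" where
  "theta_inv \<phi> l m n = (if n = 0 then 0 else inverse (theta \<phi> l m n))"

end

(* theta_{l,m,N+1} is the entry in column m+N of the unique combination of the rows
   l, ..., l+N of phi that has coefficient 1 in row l+N and kills the columns m, ..., m+N-1;
   uniqueness holds because Theta_{l,m,N} is invertible: a combination supported on k rows
   that kills the k columns of an invertible k x k block vanishes.  Divided by
   theta_{l,m,N+1}, this combination is the last row of the inverse of Theta_{l,m,N+1}.
   Comparing supports and leading coefficients yields three linear relations between such
   rows: the row of theta_{l,m,n+1} and the row of theta_{l+1,m+1,n} both differ from the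
   row of theta_{l+1,m,n} by multiples of normalized rows, and the difference of the two
   normalized rows is a multiple of the row of theta_{l,m+1,n}.  Evaluating them in column
   m+n gives the identity. *)

theory Submission
  imports Defs
begin

lemma is_mat_inverse_cong:
  assumes "\<And>i j. i < n \<Longrightarrow> j < n \<Longrightarrow> A i j = A' i j"
  shows "is_mat_inverse n A = is_mat_inverse n A'"
proof -
  have "mat_mult n A B i j = mat_mult n A' B i j" "mat_mult n B A j i = mat_mult n B A' j i"
    if "i < n" for i j B
    using that assms unfolding mat_mult_def by (auto intro: sum.cong)
  then show ?thesis
    unfolding is_mat_inverse_def by (auto simp: fun_eq_iff)
qed

lemma mat_invertible_cong:
  assumes "\<And>i j. i < n \<Longrightarrow> j < n \<Longrightarrow> A i j = A' i j"
  shows "mat_invertible n A = mat_invertible n A'"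
  unfolding mat_invertible_def by (simp add: is_mat_inverse_cong[OF assms])

lemma mat_inv_cong:
  assumes "\<And>i j. i < n \<Longrightarrow> j < n \<Longrightarrow> A i j = A' i j"
  shows "mat_inv n A = mat_inv n A'"
  unfolding mat_inv_def by (simp add: is_mat_inverse_cong[OF assms])

lemma is_mat_inverse_mat_inv: "mat_invertible n A \<Longrightarrow> is_mat_inverse n A (mat_inv n A)"
  unfolding mat_invertible_def mat_inv_def by (erule someI_ex)

lemma is_mat_inverse_commute: "is_mat_inverse n A B \<Longrightarrow> is_mat_inverse n B A"
  unfolding is_mat_inverse_def by blast

lemma sum_vec_mult_mat_mult:
  fixes x :: "nat \<Rightarrow> 'a::semiring_0"
  shows "(\<Sum>b<n. (\<Sum>a<n. x a * A a b) * B b j) = (\<Sum>a<n. x a * mat_mult n A B a j)"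
  unfolding mat_mult_def sum_distrib_left sum_distrib_right
  by (subst sum.swap) (simp add: mult.assoc)

lemma vec_mult_inverse:
  fixes x :: "nat \<Rightarrow> 'a::semiring_1"
  assumes "is_mat_inverse n A B" and "j < n"
  shows "(\<Sum>b<n. (\<Sum>a<n. x a * A a b) * B b j) = x j"
proof -
  have "(\<Sum>b<n. (\<Sum>a<n. x a * A a b) * B b j) = (\<Sum>a<n. x a * mat_id a j)"
    unfolding sum_vec_mult_mat_mult using assms by (intro sum.cong) (auto simp: is_mat_inverse_def)
  also have "\<dots> = x j"
    using assms(2) by (simp add: mat_id_def if_distrib[of "\<lambda>y. _ * y"] cong: if_cong)
  finally show ?thesis .
qed

lemma minor_last: "i < n \<Longrightarrow> j < n \<Longrightarrow> minor n n X i j = X i j"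
  by (simp add: minor_def skip_def)

lemma mat_invertible_if_qdet_defined:
  assumes "qdet_defined (Suc n) X n n"
  shows "mat_invertible n X"
proof (cases "n = 0")
  case True
  then show ?thesis by (auto simp: mat_invertible_def is_mat_inverse_def)
next
  case False
  then have "mat_invertible n (minor n n X)" using assms by (simp add: qdet_defined_def)
  then show ?thesis using mat_invertible_cong[of n "minor n n X" X] by (simp add: minor_last)
qed

lemma qdet_last:
  "qdet (Suc n) X n n = X n n - (\<Sum>b<n. (\<Sum>a<n. X n a * mat_inv n X a b) * X b n)"
proof (cases "n = 0")
  case False
  have "mat_inv n (minor n n X) = mat_inv n X" by (rule mat_inv_cong) (rule minor_last)
  with False show ?thesis
    unfolding qdet_def sum_distrib_right by (subst sum.swap) (simp add: skip_def)
qed (simp add: qdet_def)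

text \<open>Only the rows below \<open>K\<close> are combined; every coefficient vector below vanishes from
  row \<open>K\<close> on, so \<open>K\<close> is merely a bound.\<close>

definition row_comb :: "nat \<Rightarrow> (nat \<Rightarrow> nat \<Rightarrow> 'a::semiring_0) \<Rightarrow> (nat \<Rightarrow> 'a) \<Rightarrow> nat \<Rightarrow> 'a" where
  "row_comb K \<phi> c j = (\<Sum>r<K. c r * \<phi> r j)"

lemma row_comb_diff:
  fixes c d :: "nat \<Rightarrow> 'a::ring"
  shows "row_comb K \<phi> (\<lambda>r. c r - d r) j = row_comb K \<phi> c j - row_comb K \<phi> d j"
  by (simp add: row_comb_def left_diff_distrib sum_subtractf)

lemma row_comb_scale: "row_comb K \<phi> (\<lambda>r. x * c r) j = x * row_comb K \<phi> c j"
  by (simp add: row_comb_def sum_distrib_left mult.assoc)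

lemma row_comb_supported:
  assumes "{r. c r \<noteq> 0} \<subseteq> {a..<a+k}" and "a + k \<le> K"
  shows "row_comb K \<phi> c j = (\<Sum>i<k. c (a+i) * \<phi> (a+i) j)"
proof -
  have "row_comb K \<phi> c j = (\<Sum>r\<in>{a..<a+k}. c r * \<phi> r j)"
    unfolding row_comb_def by (rule sum.mono_neutral_right) (use assms in force)+
  also have "\<dots> = (\<Sum>i<k. c (a+i) * \<phi> (a+i) j)"
    by (rule sum.reindex_bij_witness[of _ "\<lambda>i. a + i" "\<lambda>r. r - a"]) auto
  finally show ?thesis .
qed

lemma annihilating_row_vector_eq_0:
  fixes c :: "nat \<Rightarrow> 'a::ring_1"
  assumes supp: "{r. c r \<noteq> 0} \<subseteq> {a..<a+k}" and K: "a + k \<le> K"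
    and annihilates: "\<And>j. j < k \<Longrightarrow> row_comb K \<phi> c (b+j) = 0"
    and inv: "mat_invertible k (Theta \<phi> a b)"
  shows "c = (\<lambda>_. 0)"
proof
  fix r
  show "c r = 0"
  proof (cases "a \<le> r \<and> r < a + k")
    case True
    define i where "i = r - a"
    have i: "i < k" "r = a + i" using True by (auto simp: i_def)
    let ?B = "mat_inv k (Theta \<phi> a b)"
    have "c r = (\<Sum>j<k. (\<Sum>i'<k. c (a+i') * Theta \<phi> a b i' j) * ?B j i)"
      using vec_mult_inverse[OF is_mat_inverse_mat_inv[OF inv] i(1)] i(2) by simp
    also have "\<dots> = (\<Sum>j<k. row_comb K \<phi> c (b+j) * ?B j i)"
      using row_comb_supported[OF supp K] by (simp add: Theta_def)
    also have "\<dots> = 0" using annihilates by simp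
    finally show ?thesis .
  next
    case False
    then show ?thesis using supp by auto
  qed
qed

definition theta_vector ::
    "nat \<Rightarrow> (nat \<Rightarrow> nat \<Rightarrow> 'a::ring_1) \<Rightarrow> nat \<Rightarrow> nat \<Rightarrow> nat \<Rightarrow> (nat \<Rightarrow> 'a) \<Rightarrow> bool" where
  "theta_vector K \<phi> l m N c \<longleftrightarrow>
     {r. c r \<noteq> 0} \<subseteq> {l..<l + Suc N} \<and> c (l + N) = 1 \<and>
     (\<forall>j<N. row_comb K \<phi> c (m + j) = 0) \<and> row_comb K \<phi> c (m + N) = theta \<phi> l m (Suc N)"

lemma theta_vector_outside:
  "theta_vector K \<phi> l m N c \<Longrightarrow> r < l \<or> l + N < r \<Longrightarrow> c r = 0"
  unfolding theta_vector_def by fastforce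

lemma theta_vector_exists:
  fixes \<phi> :: "nat \<Rightarrow> nat \<Rightarrow> 'a::ring_1"
  assumes inv: "mat_invertible N (Theta \<phi> l m)" and K: "l + N < K"
  shows "\<exists>c. theta_vector K \<phi> l m N c"
proof -
  define u where "u b = (\<Sum>a<N. \<phi> (l+N) (m+a) * mat_inv N (Theta \<phi> l m) a b)" for b
  define c where "c r = (if r = l + N then 1 else if l \<le> r \<and> r < l + N then - u (r - l) else 0)" for r
  have supp: "{r. c r \<noteq> 0} \<subseteq> {l..<l + Suc N}" by (auto simp: c_def split: if_splits)
  have row_comb_c: "row_comb K \<phi> c j = \<phi> (l+N) j - (\<Sum>b<N. u b * \<phi> (l+b) j)" for j
  proof -
    have "row_comb K \<phi> c j = (\<Sum>i<Suc N. c (l+i) * \<phi> (l+i) j)"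
      using row_comb_supported[OF supp] K by simp
    also have "\<dots> = \<phi> (l+N) j - (\<Sum>b<N. u b * \<phi> (l+b) j)"
      by (simp add: c_def sum_negf)
    finally show ?thesis .
  qed
  have "(\<Sum>b<N. u b * \<phi> (l+b) (m+j)) = \<phi> (l+N) (m+j)" if "j < N" for j
    using vec_mult_inverse[OF is_mat_inverse_commute[OF is_mat_inverse_mat_inv[OF inv]] that,
        of "\<lambda>a. \<phi> (l+N) (m+a)"]
    by (simp add: u_def Theta_def)
  moreover have "theta \<phi> l m (Suc N) = \<phi> (l+N) (m+N) - (\<Sum>b<N. u b * \<phi> (l+b) (m+N))"
    by (simp add: theta_def qdet_last u_def Theta_def)
  ultimately have "theta_vector K \<phi> l m N c"
    using supp row_comb_c by (simp add: theta_vector_def c_def)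
  then show ?thesis by blast
qed

text \<open>The last row of the inverse of \<open>Theta \<phi> l m s\<close>; for \<open>s = 0\<close> it is the zero
  vector, matching the convention \<open>theta_inv \<phi> l m 0 = 0\<close>.\<close>

definition theta_inv_vector ::
    "nat \<Rightarrow> (nat \<Rightarrow> nat \<Rightarrow> 'a::division_ring) \<Rightarrow> nat \<Rightarrow> nat \<Rightarrow> nat \<Rightarrow> (nat \<Rightarrow> 'a) \<Rightarrow> bool" where
  "theta_inv_vector K \<phi> l m s w \<longleftrightarrow>
     {r. w r \<noteq> 0} \<subseteq> {l..<l + s} \<and> w (l + s - 1) = theta_inv \<phi> l m s \<and>
     (\<forall>j<s. row_comb K \<phi> w (m + j) = (if Suc j = s then 1 else 0))"

lemma theta_inv_vector_outside:
  "theta_inv_vector K \<phi> l m s w \<Longrightarrow> r < l \<or> l + s \<le> r \<Longrightarrow> w r = 0"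
  unfolding theta_inv_vector_def by fastforce

lemma theta_inv_vector_exists:
  fixes \<phi> :: "nat \<Rightarrow> nat \<Rightarrow> 'a::division_ring"
  assumes inv: "mat_invertible (s - 1) (Theta \<phi> l m)" and nonzero: "0 < s \<Longrightarrow> theta \<phi> l m s \<noteq> 0"
    and K: "l + s \<le> K"
  shows "\<exists>w. theta_inv_vector K \<phi> l m s w"
proof (cases s)
  case 0
  then have "theta_inv_vector K \<phi> l m s (\<lambda>_. 0)" by (simp add: theta_inv_vector_def theta_inv_def)
  then show ?thesis by blast
next
  case (Suc N)
  obtain c where c: "theta_vector K \<phi> l m N c"
    using theta_vector_exists[of N \<phi> l m K] inv K Suc by auto
  have "theta_inv_vector K \<phi> l m s (\<lambda>r. inverse (theta \<phi> l m s) * c r)"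
    using c nonzero Suc by (auto simp: theta_vector_def theta_inv_vector_def theta_inv_def row_comb_scale)
  then show ?thesis by blast
qed

lemma theta_vector_Suc_eq:
  fixes \<phi> :: "nat \<Rightarrow> nat \<Rightarrow> 'a::division_ring"
  assumes inv: "mat_invertible (Suc p) (Theta \<phi> l m)" and K: "l + Suc p \<le> K"
    and e: "theta_vector K \<phi> l m (Suc p) e"
    and g: "theta_vector K \<phi> (Suc l) m p g"
    and h: "theta_inv_vector K \<phi> l m (Suc p) h"
  shows "e = (\<lambda>r. g r - theta \<phi> (Suc l) m (Suc p) * h r)"
proof -
  let ?c = "\<lambda>r. e r - (g r - theta \<phi> (Suc l) m (Suc p) * h r)"
  have "?c r = 0" if "r \<notin> {l..<l + Suc p}" for r
  proof -
    have "e r = g r"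
    proof (cases "r = l + Suc p")
      case True
      then show ?thesis using e g by (simp add: theta_vector_def)
    next
      case False
      then show ?thesis
        using that theta_vector_outside[OF e] theta_vector_outside[OF g] by auto
    qed
    moreover have "h r = 0"
      using that theta_inv_vector_outside[OF h] by auto
    ultimately show ?thesis by simp
  qed
  then have supp: "{r. ?c r \<noteq> 0} \<subseteq> {l..<l + Suc p}" by blast
  have annihilates: "row_comb K \<phi> ?c (m + j) = 0" if "j < Suc p" for j
  proof -
    have "row_comb K \<phi> e (m + j) = 0" using e that by (simp add: theta_vector_def)
    moreover have "row_comb K \<phi> g (m + j) = theta \<phi> (Suc l) m (Suc p) * row_comb K \<phi> h (m + j)"
      using g h that by (cases "j = p") (auto simp: theta_vector_def theta_inv_vector_def)
    ultimately show ?thesis by (simp add: row_comb_diff row_comb_scale)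
  qed
  have "?c = (\<lambda>_. 0)"
    by (rule annihilating_row_vector_eq_0[OF supp K annihilates inv])
  then show ?thesis by (simp add: fun_eq_iff)
qed

lemma theta_vector_shift_eq:
  fixes \<phi> :: "nat \<Rightarrow> nat \<Rightarrow> 'a::division_ring"
  assumes inv: "mat_invertible p (Theta \<phi> l (Suc m))" and K: "l + p \<le> K"
    and g: "theta_vector K \<phi> l m p g"
    and f: "theta_vector K \<phi> l (Suc m) p f"
    and w: "theta_inv_vector K \<phi> l (Suc m) p w"
  shows "f = (\<lambda>r. g r - theta \<phi> l m (Suc p) * w r)"
proof -
  let ?c = "\<lambda>r. f r - (g r - theta \<phi> l m (Suc p) * w r)"
  have "?c r = 0" if "r \<notin> {l..<l + p}" for r
  proof -
    have "f r = g r"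
    proof (cases "r = l + p")
      case True
      then show ?thesis using f g by (simp add: theta_vector_def)
    next
      case False
      then show ?thesis
        using that theta_vector_outside[OF f] theta_vector_outside[OF g] by auto
    qed
    moreover have "w r = 0"
      using that theta_inv_vector_outside[OF w] by auto
    ultimately show ?thesis by simp
  qed
  then have supp: "{r. ?c r \<noteq> 0} \<subseteq> {l..<l + p}" by blast
  have annihilates: "row_comb K \<phi> ?c (Suc m + j) = 0" if "j < p" for j
  proof -
    have "row_comb K \<phi> f (Suc m + j) = 0" using f that by (simp add: theta_vector_def)
    moreover have "row_comb K \<phi> g (m + Suc j) = theta \<phi> l m (Suc p) * row_comb K \<phi> w (Suc m + j)"
      using g w that
      by (cases "Suc j = p") (simp_all add: theta_vector_def theta_inv_vector_def del: add_Suc_right)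
    ultimately show ?thesis by (simp add: row_comb_diff row_comb_scale)
  qed
  have "?c = (\<lambda>_. 0)"
    by (rule annihilating_row_vector_eq_0[OF supp K annihilates inv])
  then show ?thesis by (simp add: fun_eq_iff)
qed

lemma theta_inv_vector_diff_eq:
  fixes \<phi> :: "nat \<Rightarrow> nat \<Rightarrow> 'a::division_ring"
  assumes inv: "mat_invertible p (Theta \<phi> l (Suc m))" and K: "l + p \<le> K"
    and h: "theta_inv_vector K \<phi> l m (Suc p) h"
    and w: "theta_inv_vector K \<phi> (Suc l) (Suc m) p w"
    and k: "theta_vector K \<phi> l (Suc m) p k"
  shows "(\<lambda>r. h r - w r) = (\<lambda>r. (theta_inv \<phi> l m (Suc p) - theta_inv \<phi> (Suc l) (Suc m) p) * k r)"
proof -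
  let ?z = "theta_inv \<phi> l m (Suc p) - theta_inv \<phi> (Suc l) (Suc m) p"
  let ?c = "\<lambda>r. h r - w r - ?z * k r"
  have "?c r = 0" if "r \<notin> {l..<l + p}" for r
  proof (cases "r = l + p")
    case True
    then show ?thesis
      using h w k by (simp add: theta_vector_def theta_inv_vector_def)
  next
    case False
    then show ?thesis
      using that theta_inv_vector_outside[OF h] theta_inv_vector_outside[OF w] theta_vector_outside[OF k]
      by auto
  qed
  then have supp: "{r. ?c r \<noteq> 0} \<subseteq> {l..<l + p}" by blast
  have annihilates: "row_comb K \<phi> ?c (Suc m + j) = 0" if "j < p" for j
  proof -
    have "row_comb K \<phi> k (Suc m + j) = 0" using k that by (simp add: theta_vector_def)
    moreover have "row_comb K \<phi> h (m + Suc j) = row_comb K \<phi> w (Suc m + j)"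
      using h w that by (simp add: theta_inv_vector_def del: add_Suc_right)
    ultimately show ?thesis by (simp add: row_comb_diff row_comb_scale)
  qed
  have "?c = (\<lambda>_. 0)"
    by (rule annihilating_row_vector_eq_0[OF supp K annihilates inv])
  then show ?thesis by (simp add: fun_eq_iff)
qed

theorem proposition3p1:
  fixes \<phi> :: "nat \<Rightarrow> nat \<Rightarrow> 'a::{division_ring, ring_char_0}"
  assumes defined: "\<And>l m n i j. 1 \<le> n \<Longrightarrow> i < n \<Longrightarrow> j < n \<Longrightarrow> qdet_defined n (Theta \<phi> l m) i j"
    and invertible: "\<And>l m n. 1 \<le> n \<Longrightarrow> theta \<phi> l m n \<noteq> 0"
    and n: "1 \<le> n"
  shows "theta \<phi> (l+1) (m+1) n =
           theta \<phi> l m (n+1)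
           + theta \<phi> (l+1) m n * (theta_inv \<phi> l m n - theta_inv \<phi> (l+1) (m+1) (n-1)) * theta \<phi> l (m+1) n"
proof -
  have inv: "mat_invertible k (Theta \<phi> a b)" for k a b
    using defined[of "Suc k" k k] by (intro mat_invertible_if_qdet_defined) simp
  obtain p where n_Suc: "n = Suc p" using \<open>1 \<le> n\<close> by (cases n) auto
  define K where "K = l + p + 2"
  obtain e where e: "theta_vector K \<phi> l m (Suc p) e" using theta_vector_exists[OF inv] K_def by fastforce
  obtain g where g: "theta_vector K \<phi> (Suc l) m p g" using theta_vector_exists[OF inv] K_def by fastforce
  obtain f where f: "theta_vector K \<phi> (Suc l) (Suc m) p f" using theta_vector_exists[OF inv] K_def by fastforce
  obtain k where k: "theta_vector K \<phi> l (Suc m) p k" using theta_vector_exists[OF inv] K_def by fastforce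
  obtain h where h: "theta_inv_vector K \<phi> l m (Suc p) h"
    using theta_inv_vector_exists[OF inv] invertible K_def by fastforce
  obtain w where w: "theta_inv_vector K \<phi> (Suc l) (Suc m) p w"
    using theta_inv_vector_exists[OF inv] invertible K_def by fastforce
  let ?col = "\<lambda>c. row_comb K \<phi> c (m + n)"
  have theta_l_m_Suc: "theta \<phi> l m (n+1) = ?col g - theta \<phi> (l+1) m n * ?col h"
    using arg_cong[OF theta_vector_Suc_eq[OF inv _ e g h], of ?col] e K_def n_Suc
    by (simp add: theta_vector_def row_comb_diff row_comb_scale)
  have theta_Suc_Suc: "theta \<phi> (l+1) (m+1) n = ?col g - theta \<phi> (l+1) m n * ?col w"
    using arg_cong[OF theta_vector_shift_eq[OF inv _ g f w], of ?col] f K_def n_Suc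
    by (simp add: theta_vector_def row_comb_diff row_comb_scale)
  have theta_inv_diff: "?col h - ?col w =
      (theta_inv \<phi> l m n - theta_inv \<phi> (l+1) (m+1) (n-1)) * theta \<phi> l (m+1) n"
    using arg_cong[OF theta_inv_vector_diff_eq[OF inv _ h w k], of ?col] k K_def n_Suc
    by (simp add: theta_vector_def row_comb_diff row_comb_scale)
  have "theta \<phi> (l+1) (m+1) n = theta \<phi> l m (n+1) + theta \<phi> (l+1) m n * (?col h - ?col w)"
    unfolding theta_Suc_Suc theta_l_m_Suc by (simp add: algebra_simps)
  then show ?thesis
    unfolding theta_inv_diff by (simp add: mult.assoc)
qed

end
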